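(* Let $X$ be a compact metric space with metric $d$, let $L>0$, and let $f\colon X\to X$ be a continuous map with the $L$-Lipschitz shadowing property. Then $CR(f)$ is $f$-invariant and the restriction $f|_{CR(f)}\colon CR(f)\to CR(f)$ (with the restricted metric) also has the $L$-Lipschitz shadowing property.
   Context: For a continuous map $g\colon Y\to Y$ on a metric space $(Y,d)$ and $\delta>0$, a sequence $(x_i)_{i\ge0}$ in $Y$ is a $\delta$-pseudo orbit of $g$ if $d(g(x_i),x_{i+1})\le\delta$ for all $i\ge0$; it is $\epsilon$-shadowed by $y\in Y$ if $d(g^i(y),x_i)\le\epsilon$ for all $i\ge0$. $g$ has the $L$-Lipschitz shadowing property if there is $\delta_0>0$ such that for every $0<\delta\le\delta_0$, every $\delta$-pseudo orbit of $g$ is $L\delta$-shadowed by some point of $Y$. A $\delta$-chain of $f$ is a finite sequence $(x_i)_{i=0}^k$, $k\ge1$, with $d(f(x_i),x_{i+1})\le\delta$ for $0\le i\le k-1$; a $\delta$-cycle is one with $x_0=x_k$. $CR(f)$ is the set of $x\in X$ such that for every $\delta>0$ there is a $\delta$-cycle of $f$ with $x_0=x_k=x$. *)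

theory Defs
  imports "HOL-Analysis.Analysis"
begin

text \<open>A metric space (Y,d) is modelled as a subset Y of a metric_space type with the
restricted metric dist; a self map g of Y is a function g with g ` Y \<subseteq> Y.\<close>

definition pseudo_orbit :: "'a::metric_space set \<Rightarrow> ('a \<Rightarrow> 'a) \<Rightarrow> real \<Rightarrow> (nat \<Rightarrow> 'a) \<Rightarrow> bool" where
  "pseudo_orbit Y g \<delta> xs \<longleftrightarrow> (\<forall>i. xs i \<in> Y) \<and> (\<forall>i. dist (g (xs i)) (xs (Suc i)) \<le> \<delta>)"

definition shadows :: "'a::metric_space set \<Rightarrow> ('a \<Rightarrow> 'a) \<Rightarrow> real \<Rightarrow> (nat \<Rightarrow> 'a) \<Rightarrow> 'a \<Rightarrow> bool" where
  "shadows Y g \<epsilon> xs y \<longleftrightarrow> y \<in> Y \<and> (\<forall>i. dist ((g ^^ i) y) (xs i) \<le> \<epsilon>)"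

definition lipschitz_shadowing :: "'a::metric_space set \<Rightarrow> ('a \<Rightarrow> 'a) \<Rightarrow> real \<Rightarrow> bool" where
  "lipschitz_shadowing Y g L \<longleftrightarrow>
     (\<exists>\<delta>0>0. \<forall>\<delta>. 0 < \<delta> \<and> \<delta> \<le> \<delta>0 \<longrightarrow>
        (\<forall>xs. pseudo_orbit Y g \<delta> xs \<longrightarrow> (\<exists>y. shadows Y g (L * \<delta>) xs y)))"

definition delta_chain :: "'a::metric_space set \<Rightarrow> ('a \<Rightarrow> 'a) \<Rightarrow> real \<Rightarrow> (nat \<Rightarrow> 'a) \<Rightarrow> nat \<Rightarrow> bool" where
  "delta_chain X f \<delta> xs k \<longleftrightarrow> 1 \<le> k \<and> (\<forall>i\<le>k. xs i \<in> X) \<and> (\<forall>i<k. dist (f (xs i)) (xs (Suc i)) \<le> \<delta>)"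

definition chain_recurrent_set :: "'a::metric_space set \<Rightarrow> ('a \<Rightarrow> 'a) \<Rightarrow> 'a set" where
  "chain_recurrent_set X f = {x \<in> X. \<forall>\<delta>>0. \<exists>xs k. delta_chain X f \<delta> xs k \<and> xs 0 = x \<and> xs k = x}"

end

theory Submission
  imports Defs
begin

(* The chain recurrent set CR(f) is closed, and f maps it into itself by uniform continuity.
   It is also covered by its image: the last points before x of 1/n-cycles through x
   accumulate at a chain recurrent preimage of x.  Going through such a preimage, every
   delta-step a -> b between points of CR(f) can be undone by a delta-chain from b back to a.
   So for a delta-pseudo orbit (x_i) in CR(f), the segment x_0, ..., x_(n+1) followed by a
   delta-chain back to x_0 is a periodic delta-pseudo orbit in X.  Its (L delta)-shadow,
   sampled once per period, accumulates at a point that lies in CR(f) (as a limit point of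
   an orbit) and still (L delta)-shadows x_0, ..., x_n.  A limit point of these points as
   n grows shadows the whole pseudo orbit inside CR(f). *)

definition chain_reachable :: "'a::metric_space set \<Rightarrow> ('a \<Rightarrow> 'a) \<Rightarrow> real \<Rightarrow> 'a \<Rightarrow> 'a \<Rightarrow> bool" where
  "chain_reachable X f \<delta> a b \<longleftrightarrow> (\<exists>xs k. delta_chain X f \<delta> xs k \<and> xs 0 = a \<and> xs k = b)"

lemma mem_chain_recurrent_set_iff:
  "x \<in> chain_recurrent_set X f \<longleftrightarrow> x \<in> X \<and> (\<forall>\<delta>>0. chain_reachable X f \<delta> x x)"
  unfolding chain_recurrent_set_def chain_reachable_def by auto

lemma chain_recurrent_set_subset: "chain_recurrent_set X f \<subseteq> X"
  unfolding chain_recurrent_set_def by auto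

lemma chain_reachable_mem:
  assumes "chain_reachable X f \<delta> a b"
  shows "a \<in> X" "b \<in> X"
  using assms unfolding chain_reachable_def delta_chain_def by auto

lemma chain_reachable_mono:
  assumes "chain_reachable X f \<delta> a b" "\<delta> \<le> \<epsilon>"
  shows "chain_reachable X f \<epsilon> a b"
proof -
  obtain xs k where "delta_chain X f \<delta> xs k" "xs 0 = a" "xs k = b"
    using assms(1) unfolding chain_reachable_def by blast
  then have "delta_chain X f \<epsilon> xs k" "xs 0 = a" "xs k = b"
    using assms(2) unfolding delta_chain_def by (auto intro: order_trans)
  then show ?thesis
    unfolding chain_reachable_def by blast
qed

lemma chain_reachable_step:
  assumes "a \<in> X" "b \<in> X" "dist (f a) b \<le> \<delta>"
  shows "chain_reachable X f \<delta> a b"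
proof -
  have "delta_chain X f \<delta> (\<lambda>i. if i = 0 then a else b) 1"
    using assms unfolding delta_chain_def by auto
  then show ?thesis
    unfolding chain_reachable_def by (intro exI[of _ "\<lambda>i. if i = 0 then a else b"] exI[of _ 1]) simp
qed

lemma delta_chain_append:
  assumes xs: "delta_chain X f \<delta> xs k" and ys: "delta_chain X f \<delta> ys m" and "ys 0 = xs k"
  shows "delta_chain X f \<delta> (\<lambda>i. if i \<le> k then xs i else ys (i - k)) (k + m)"
  unfolding delta_chain_def
proof (intro conjI allI impI)
  show "1 \<le> k + m"
    using xs unfolding delta_chain_def by simp
next
  fix i assume "i \<le> k + m"
  then show "(if i \<le> k then xs i else ys (i - k)) \<in> X"
    using xs ys unfolding delta_chain_def by auto
next
  fix i assume i: "i < k + m"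
  consider "i < k" | "i = k" | "k < i" by linarith
  then show "dist (f (if i \<le> k then xs i else ys (i - k)))
               (if Suc i \<le> k then xs (Suc i) else ys (Suc i - k)) \<le> \<delta>"
  proof cases
    case 1
    then show ?thesis using xs unfolding delta_chain_def by auto
  next
    case 2
    then show ?thesis using ys i \<open>ys 0 = xs k\<close> unfolding delta_chain_def by auto
  next
    case 3
    then have "Suc i - k = Suc (i - k)" "i - k < m" using i by auto
    then show ?thesis using ys 3 unfolding delta_chain_def by auto
  qed
qed

lemma chain_reachable_trans [trans]:
  assumes "chain_reachable X f \<delta> a b" "chain_reachable X f \<delta> b c"
  shows "chain_reachable X f \<delta> a c"
proof -
  obtain xs k where xs: "delta_chain X f \<delta> xs k" "xs 0 = a" "xs k = b"
    using assms(1) unfolding chain_reachable_def by blast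
  obtain ys m where ys: "delta_chain X f \<delta> ys m" "ys 0 = b" "ys m = c"
    using assms(2) unfolding chain_reachable_def by blast
  have "1 \<le> m" using ys(1) unfolding delta_chain_def by simp
  then show ?thesis
    unfolding chain_reachable_def using delta_chain_append[OF xs(1) ys(1)] xs ys
    by (intro exI[of _ "\<lambda>i. if i \<le> k then xs i else ys (i - k)"] exI[of _ "k + m"]) auto
qed

lemma chain_reachable_perturb_start:
  assumes "chain_reachable X f \<delta> a b" "a' \<in> X" "dist (f a') (f a) \<le> \<eta>"
  shows "chain_reachable X f (\<delta> + \<eta>) a' b"
proof -
  obtain xs k where xs: "delta_chain X f \<delta> xs k" "xs 0 = a" "xs k = b"
    using assms(1) unfolding chain_reachable_def by blast
  have "delta_chain X f (\<delta> + \<eta>) (xs(0 := a')) k"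
    unfolding delta_chain_def
  proof (intro conjI allI impI)
    fix i assume "i < k"
    then have step: "dist (f (xs i)) (xs (Suc i)) \<le> \<delta>"
      using xs(1) unfolding delta_chain_def by simp
    show "dist (f ((xs(0 := a')) i)) ((xs(0 := a')) (Suc i)) \<le> \<delta> + \<eta>"
    proof (cases "i = 0")
      case True
      have "dist (f a') (xs (Suc 0)) \<le> dist (f a') (f a) + dist (f a) (xs (Suc 0))"
        by (rule dist_triangle)
      then show ?thesis using True step xs(2) assms(3) by simp
    next
      case False
      have "0 \<le> \<eta>"
        using order_trans[OF zero_le_dist assms(3)] .
      then show ?thesis using False step by simp
    qed
  qed (use xs assms(2) in \<open>auto simp: delta_chain_def\<close>)
  moreover have "(xs(0 := a')) k = b"
    using xs unfolding delta_chain_def by auto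
  ultimately show ?thesis
    unfolding chain_reachable_def by (intro exI[of _ "xs(0 := a')"] exI[of _ k]) simp
qed

lemma chain_reachable_perturb_end:
  assumes "chain_reachable X f \<delta> a b" "b' \<in> X" "dist b b' \<le> \<eta>"
  shows "chain_reachable X f (\<delta> + \<eta>) a b'"
proof -
  obtain xs k where xs: "delta_chain X f \<delta> xs k" "xs 0 = a" "xs k = b"
    using assms(1) unfolding chain_reachable_def by blast
  have "delta_chain X f (\<delta> + \<eta>) (xs(k := b')) k"
    unfolding delta_chain_def
  proof (intro conjI allI impI)
    fix i assume "i < k"
    then have step: "dist (f (xs i)) (xs (Suc i)) \<le> \<delta>"
      using xs(1) unfolding delta_chain_def by simp
    have unchanged: "(xs(k := b')) i = xs i"
      using \<open>i < k\<close> by simp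
    show "dist (f ((xs(k := b')) i)) ((xs(k := b')) (Suc i)) \<le> \<delta> + \<eta>"
    proof (cases "Suc i = k")
      case True
      have "dist (f (xs i)) b' \<le> dist (f (xs i)) b + dist b b'"
        by (rule dist_triangle)
      then show ?thesis using True step unchanged xs(3) assms(3) by simp
    next
      case False
      have "0 \<le> \<eta>"
        using order_trans[OF zero_le_dist assms(3)] .
      then show ?thesis using False step unchanged by simp
    qed
  qed (use xs assms(2) in \<open>auto simp: delta_chain_def\<close>)
  moreover have "(xs(k := b')) 0 = a"
    using xs unfolding delta_chain_def by auto
  ultimately show ?thesis
    unfolding chain_reachable_def by (intro exI[of _ "xs(k := b')"] exI[of _ k]) simp
qed

lemma pseudo_orbit_chain_reachable:
  assumes "pseudo_orbit X f \<delta> xs" "i < j"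
  shows "chain_reachable X f \<delta> (xs i) (xs j)"
proof -
  have "delta_chain X f \<delta> (\<lambda>m. xs (i + m)) (j - i)"
    using assms unfolding delta_chain_def pseudo_orbit_def by auto
  then show ?thesis
    unfolding chain_reachable_def using assms(2)
    by (intro exI[of _ "\<lambda>m. xs (i + m)"] exI[of _ "j - i"]) simp
qed

lemma pseudo_orbit_periodic:
  assumes "delta_chain X f \<delta> xs k" "xs k = xs 0"
  shows "pseudo_orbit X f \<delta> (\<lambda>i. xs (i mod k))"
  unfolding pseudo_orbit_def
proof (intro conjI allI)
  have "0 < k" using assms(1) unfolding delta_chain_def by simp
  fix i
  show "xs (i mod k) \<in> X"
    using assms(1) \<open>0 < k\<close> unfolding delta_chain_def by (simp add: less_imp_le)
  have "dist (f (xs (i mod k))) (xs (Suc (i mod k))) \<le> \<delta>"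
    using assms(1) \<open>0 < k\<close> unfolding delta_chain_def by simp
  then show "dist (f (xs (i mod k))) (xs (Suc i mod k)) \<le> \<delta>"
    using assms(2) by (auto simp: mod_Suc)
qed

lemma chain_reachable_on_cycle:
  assumes "delta_chain X f \<delta> xs k" "xs k = xs 0" "i < k"
  shows "chain_reachable X f \<delta> (xs i) (xs i)"
proof -
  have "pseudo_orbit X f \<delta> (\<lambda>j. xs (j mod k))"
    by (rule pseudo_orbit_periodic[OF assms(1,2)])
  from pseudo_orbit_chain_reachable[OF this, of i "i + k"] show ?thesis
    using assms(3) by simp
qed

lemma continuous_on_dist_le:
  assumes "continuous_on X f" "x \<in> X" "\<epsilon> > 0"
  obtains \<beta> where "\<beta> > 0" "\<And>y. y \<in> X \<Longrightarrow> dist y x \<le> \<beta> \<Longrightarrow> dist (f y) (f x) \<le> \<epsilon>"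
proof -
  obtain \<beta> where "\<beta> > 0" "\<And>y. y \<in> X \<Longrightarrow> dist y x < \<beta> \<Longrightarrow> dist (f y) (f x) < \<epsilon>"
    using assms unfolding continuous_on_iff by metis
  then show ?thesis
    by (intro that[of "\<beta> / 2"]) force+
qed

lemma funpow_mem: "f ` X \<subseteq> X \<Longrightarrow> x \<in> X \<Longrightarrow> (f ^^ n) x \<in> X"
  by (induction n) auto

lemma continuous_on_funpow:
  assumes "continuous_on X f" "f ` X \<subseteq> X"
  shows "continuous_on X (f ^^ n)"
proof (induction n)
  case (Suc n)
  have "continuous_on ((f ^^ n) ` X) f"
    using continuous_on_subset[OF assms(1)] funpow_mem[OF assms(2)] by blast
  then show ?case
    using continuous_on_compose[OF Suc.IH] by simp
qed simp

lemma mem_chain_recurrent_setI: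
  assumes "continuous_on X f" "z \<in> X"
    and approx: "\<And>\<delta> \<beta>. \<delta> > 0 \<Longrightarrow> \<beta> > 0 \<Longrightarrow>
                   \<exists>a b. dist a z \<le> \<beta> \<and> dist b z \<le> \<beta> \<and> chain_reachable X f \<delta> a b"
  shows "z \<in> chain_recurrent_set X f"
  unfolding mem_chain_recurrent_set_iff
proof (intro conjI allI impI)
  fix \<epsilon> :: real assume "\<epsilon> > 0"
  then obtain \<beta> where \<beta>: "\<beta> > 0" "\<And>y. y \<in> X \<Longrightarrow> dist y z \<le> \<beta> \<Longrightarrow> dist (f y) (f z) \<le> \<epsilon> / 3"
    using continuous_on_dist_le[OF assms(1,2), of "\<epsilon> / 3"] by auto
  obtain a b where ab: "dist a z \<le> min \<beta> (\<epsilon> / 3)" "dist b z \<le> min \<beta> (\<epsilon> / 3)"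
    and reach: "chain_reachable X f (\<epsilon> / 3) a b"
    using approx[of "\<epsilon> / 3" "min \<beta> (\<epsilon> / 3)"] \<open>\<epsilon> > 0\<close> \<beta>(1) by auto
  have "dist (f z) (f a) \<le> \<epsilon> / 3"
    using \<beta>(2)[of a] ab chain_reachable_mem[OF reach] by (simp add: dist_commute)
  then have "chain_reachable X f (\<epsilon> / 3 + \<epsilon> / 3) z b"
    by (rule chain_reachable_perturb_start[OF reach assms(2)])
  then have "chain_reachable X f (\<epsilon> / 3 + \<epsilon> / 3 + \<epsilon> / 3) z z"
    by (rule chain_reachable_perturb_end[OF _ assms(2)]) (use ab in simp)
  then show "chain_reachable X f \<epsilon> z z"
    by (rule chain_reachable_mono) simp
qed fact

lemma cycle_limit_mem_chain_recurrent_set: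
  assumes "continuous_on X f" "z \<in> X" "v \<longlonglongrightarrow> z" "\<delta> \<longlonglongrightarrow> 0"
    and cycles: "\<And>n. chain_reachable X f (\<delta> n) (v n) (v n)"
  shows "z \<in> chain_recurrent_set X f"
proof (rule mem_chain_recurrent_setI[OF assms(1,2)])
  fix \<epsilon> \<beta> :: real assume "\<epsilon> > 0" "\<beta> > 0"
  have "eventually (\<lambda>n. dist (v n) z < \<beta>) sequentially"
    using assms(3) \<open>\<beta> > 0\<close> unfolding tendsto_iff by simp
  moreover have "eventually (\<lambda>n. \<delta> n < \<epsilon>) sequentially"
    using order_tendstoD(2)[OF assms(4) \<open>\<epsilon> > 0\<close>] .
  ultimately have "eventually (\<lambda>n. dist (v n) z < \<beta> \<and> \<delta> n < \<epsilon>) sequentially"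
    by (rule eventually_conj)
  then obtain n where "dist (v n) z < \<beta>" "\<delta> n < \<epsilon>"
    unfolding eventually_sequentially by blast
  then show "\<exists>a b. dist a z \<le> \<beta> \<and> dist b z \<le> \<beta> \<and> chain_reachable X f \<epsilon> a b"
    using chain_reachable_mono[OF cycles[of n]] by (meson less_imp_le)
qed

lemma closed_chain_recurrent_set:
  assumes "closed X" "continuous_on X f"
  shows "closed (chain_recurrent_set X f)"
  unfolding closed_sequential_limits
proof (intro allI impI, elim conjE)
  fix xs z assume xs: "\<forall>n. xs n \<in> chain_recurrent_set X f" and "xs \<longlonglongrightarrow> z"
  then have "z \<in> X"
    using closed_sequentially[OF assms(1)] chain_recurrent_set_subset by blast
  then show "z \<in> chain_recurrent_set X f"
    by (rule cycle_limit_mem_chain_recurrent_set[OF assms(2) _ \<open>xs \<longlonglongrightarrow> z\<close> LIMSEQ_inverse_real_of_nat])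
      (use xs in \<open>simp add: mem_chain_recurrent_set_iff\<close>)
qed

lemma orbit_limit_mem_chain_recurrent_set:
  assumes "continuous_on X f" "f ` X \<subseteq> X" "y \<in> X" "z \<in> X" "strict_mono r"
    and lim: "(\<lambda>k. (f ^^ r k) y) \<longlonglongrightarrow> z"
  shows "z \<in> chain_recurrent_set X f"
proof (rule mem_chain_recurrent_setI[OF assms(1,4)])
  fix \<delta> \<beta> :: real assume "\<delta> > 0" "\<beta> > 0"
  have orbit: "pseudo_orbit X f \<delta> (\<lambda>i. (f ^^ i) y)"
    using funpow_mem[OF assms(2,3)] \<open>\<delta> > 0\<close> unfolding pseudo_orbit_def by simp
  obtain N where N: "\<And>k. k \<ge> N \<Longrightarrow> dist ((f ^^ r k) y) z < \<beta>"
    using lim \<open>\<beta> > 0\<close> unfolding tendsto_iff eventually_sequentially by blast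
  have "chain_reachable X f \<delta> ((f ^^ r N) y) ((f ^^ r (Suc N)) y)"
    using pseudo_orbit_chain_reachable[OF orbit] assms(5) by (simp add: strict_mono_Suc_iff)
  then show "\<exists>a b. dist a z \<le> \<beta> \<and> dist b z \<le> \<beta> \<and> chain_reachable X f \<delta> a b"
    using N[of N] N[of "Suc N"] by (meson le_Suc_eq less_imp_le order_refl)
qed

lemma image_chain_recurrent_set_subset:
  assumes "compact X" "continuous_on X f" "f ` X \<subseteq> X"
  shows "f ` chain_recurrent_set X f \<subseteq> chain_recurrent_set X f"
proof (intro image_subsetI)
  fix x assume x: "x \<in> chain_recurrent_set X f"
  show "f x \<in> chain_recurrent_set X f"
    unfolding mem_chain_recurrent_set_iff
  proof (intro conjI allI impI)
    show "f x \<in> X"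
      using x assms(3) chain_recurrent_set_subset by blast
    fix \<epsilon> :: real assume "\<epsilon> > 0"
    obtain \<beta> where "\<beta> > 0" and uc: "\<And>u v. u \<in> X \<Longrightarrow> v \<in> X \<Longrightarrow> dist v u < \<beta> \<Longrightarrow> dist (f v) (f u) < \<epsilon>"
      using compact_uniformly_continuous[OF assms(2,1)] \<open>\<epsilon> > 0\<close>
      unfolding uniformly_continuous_on_def by metis
    obtain xs k where xs: "delta_chain X f (\<beta> / 2) xs k" "xs 0 = x" "xs k = x"
      using x \<open>\<beta> > 0\<close> unfolding mem_chain_recurrent_set_iff chain_reachable_def
      by (meson half_gt_zero)
    have "delta_chain X f \<epsilon> (\<lambda>i. f (xs i)) k"
      unfolding delta_chain_def
    proof (intro conjI allI impI)
      fix i assume "i < k"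
      then have "xs i \<in> X" "xs (Suc i) \<in> X" "dist (f (xs i)) (xs (Suc i)) < \<beta>"
        using xs(1) \<open>\<beta> > 0\<close> unfolding delta_chain_def by force+
      then show "dist (f (f (xs i))) (f (xs (Suc i))) \<le> \<epsilon>"
        using uc[of "xs (Suc i)" "f (xs i)"] assms(3) by (simp add: image_subset_iff dist_commute)
    qed (use xs assms(3) in \<open>auto simp: delta_chain_def\<close>)
    then show "chain_reachable X f \<epsilon> (f x) (f x)"
      unfolding chain_reachable_def using xs by (intro exI[of _ "\<lambda>i. f (xs i)"] exI[of _ k]) simp
  qed
qed

lemma chain_reachable_image_self:
  assumes "continuous_on X f" "f ` X \<subseteq> X" "x \<in> chain_recurrent_set X f" "\<delta> > 0"
  shows "chain_reachable X f \<delta> (f x) x"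
proof -
  have "x \<in> X" "f x \<in> X"
    using assms(2,3) chain_recurrent_set_subset by blast+
  obtain \<beta> where \<beta>: "\<beta> > 0" "\<And>y. y \<in> X \<Longrightarrow> dist y (f x) \<le> \<beta> \<Longrightarrow> dist (f y) (f (f x)) \<le> \<delta> / 2"
    using continuous_on_dist_le[OF assms(1) \<open>f x \<in> X\<close>, of "\<delta> / 2"] assms(4) by auto
  define \<gamma> where "\<gamma> = min \<beta> (\<delta> / 2)"
  have "\<gamma> > 0"
    using \<beta>(1) assms(4) by (simp add: \<gamma>_def)
  then obtain xs k where xs: "delta_chain X f \<gamma> xs k" "xs 0 = x" "xs k = x"
    using assms(3) unfolding mem_chain_recurrent_set_iff chain_reachable_def by blast
  define P where "P i = xs (i mod k)" for i
  have P: "pseudo_orbit X f \<gamma> P"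
    unfolding P_def using pseudo_orbit_periodic[OF xs(1)] xs(2,3) by simp
  have "0 < k"
    using xs(1) unfolding delta_chain_def by simp
  \<comment> \<open>Going around the cycle twice gives a chain of positive length from its
    second point back to x, even when k = 1.\<close>
  then have returns: "chain_reachable X f \<gamma> (P 1) x"
    using pseudo_orbit_chain_reachable[OF P, of 1 "2 * k"] xs(2) by (simp add: P_def)
  have "dist (f x) (P 1) \<le> \<gamma>"
    using P xs(2) unfolding pseudo_orbit_def P_def by (metis mod_0 One_nat_def)
  then have "dist (f (f x)) (f (P 1)) \<le> \<delta> / 2"
    using \<beta>(2)[of "P 1"] P unfolding pseudo_orbit_def \<gamma>_def by (simp add: dist_commute)
  then have "chain_reachable X f (\<gamma> + \<delta> / 2) (f x) x"
    by (rule chain_reachable_perturb_start[OF returns \<open>f x \<in> X\<close>])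
  then show ?thesis
    by (rule chain_reachable_mono) (simp add: \<gamma>_def)
qed

lemma chain_recurrent_set_subset_image:
  assumes "compact X" "continuous_on X f"
  shows "chain_recurrent_set X f \<subseteq> f ` chain_recurrent_set X f"
proof
  fix x assume x: "x \<in> chain_recurrent_set X f"
  define \<delta> where "\<delta> n = inverse (real (Suc n))" for n
  have "\<forall>n. \<exists>xs k. delta_chain X f (\<delta> n) xs k \<and> xs 0 = x \<and> xs k = x"
    using x unfolding mem_chain_recurrent_set_iff chain_reachable_def \<delta>_def by simp
  then obtain C K where C: "\<And>n. delta_chain X f (\<delta> n) (C n) (K n)"
    and C_ends: "\<And>n. C n 0 = x" "\<And>n. C n (K n) = x"
    by metis
  have K: "0 < K n" for n
    using C unfolding delta_chain_def by (simp add: Suc_le_eq)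
  define v where "v n = C n (K n - 1)" for n
  have v: "v n \<in> X" "dist (f (v n)) x \<le> \<delta> n" for n
  proof -
    obtain m where "K n = Suc m"
      using K[of n] gr0_implies_Suc by blast
    then show "v n \<in> X" "dist (f (v n)) x \<le> \<delta> n"
      using C[of n] C_ends(2)[of n] unfolding delta_chain_def v_def by auto
  qed
  have v_cycle: "chain_reachable X f (\<delta> n) (v n) (v n)" for n
    unfolding v_def using chain_reachable_on_cycle[OF C] C_ends K by simp
  obtain u r where u: "u \<in> X" "strict_mono r" "(v \<circ> r) \<longlonglongrightarrow> u"
    using seq_compactE[OF compact_imp_seq_compact[OF assms(1)]] v(1) by metis
  have \<delta>_lim: "(\<lambda>n. \<delta> (r n)) \<longlonglongrightarrow> 0"
    using LIMSEQ_subseq_LIMSEQ[OF LIMSEQ_inverse_real_of_nat u(2)] by (simp add: \<delta>_def o_def)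
  have "u \<in> chain_recurrent_set X f"
    using cycle_limit_mem_chain_recurrent_set[OF assms(2) u(1,3) \<delta>_lim] v_cycle by simp
  moreover have "f u = x"
  proof (rule LIMSEQ_unique)
    have "eventually (\<lambda>n. (v \<circ> r) n \<in> X) sequentially"
      using v(1) by simp
    from continuous_on_tendsto_compose[OF assms(2) u(3) u(1) this]
    show "(\<lambda>n. f (v (r n))) \<longlonglongrightarrow> f u"
      by (simp add: o_def)
    have "eventually (\<lambda>n. norm (dist (f (v (r n))) x) \<le> \<delta> (r n)) sequentially"
      using v(2) by simp
    from Lim_null_comparison[OF this \<delta>_lim]
    show "(\<lambda>n. f (v (r n))) \<longlonglongrightarrow> x"
      by (rule tendsto_dist_iff[THEN iffD2])
  qed
  ultimately show "x \<in> f ` chain_recurrent_set X f"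
    by blast
qed

lemma chain_reachable_back_step:
  assumes "compact X" "continuous_on X f" "f ` X \<subseteq> X"
    and a: "a \<in> chain_recurrent_set X f" and b: "b \<in> chain_recurrent_set X f"
    and "dist (f a) b \<le> \<delta>" "\<delta> > 0"
  shows "chain_reachable X f \<delta> b a"
proof -
  \<comment> \<open>The step from a to b has no slack, so it is reproduced exactly as a step
    from a preimage u of b to f a.\<close>
  obtain u where u: "u \<in> chain_recurrent_set X f" "f u = b"
    using chain_recurrent_set_subset_image[OF assms(1,2)] b by blast
  have "u \<in> X" "f a \<in> X"
    using u(1) a assms(3) chain_recurrent_set_subset by blast+
  have "chain_reachable X f \<delta> b u"
    using chain_reachable_image_self[OF assms(2,3) u(1) \<open>\<delta> > 0\<close>] u(2) by simp
  also have "chain_reachable X f \<delta> u (f a)"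
    using chain_reachable_step[OF \<open>u \<in> X\<close> \<open>f a \<in> X\<close>] u(2) \<open>dist (f a) b \<le> \<delta>\<close>
    by (simp add: dist_commute)
  also have "chain_reachable X f \<delta> (f a) a"
    using chain_reachable_image_self[OF assms(2,3) a \<open>\<delta> > 0\<close>] .
  finally show ?thesis .
qed

lemma chain_reachable_pseudo_orbit_start:
  assumes "compact X" "continuous_on X f" "f ` X \<subseteq> X" "\<delta> > 0"
    and xs: "pseudo_orbit (chain_recurrent_set X f) f \<delta> xs"
  shows "chain_reachable X f \<delta> (xs n) (xs 0)"
proof (induction n)
  case 0
  show ?case
    using xs \<open>\<delta> > 0\<close> unfolding pseudo_orbit_def mem_chain_recurrent_set_iff by blast
next
  case (Suc n)
  have "chain_reachable X f \<delta> (xs (Suc n)) (xs n)"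
    using chain_reachable_back_step[OF assms(1-3)] xs \<open>\<delta> > 0\<close> unfolding pseudo_orbit_def by blast
  also note Suc.IH
  finally show ?case .
qed

lemma dist_funpow_le_of_limit:
  assumes "continuous_on X f" "f ` X \<subseteq> X" "\<And>k. y k \<in> X" "y \<longlonglongrightarrow> z" "z \<in> X"
    and "eventually (\<lambda>k. dist ((f ^^ i) (y k)) a \<le> \<epsilon>) sequentially"
  shows "dist ((f ^^ i) z) a \<le> \<epsilon>"
proof -
  have "(\<lambda>k. (f ^^ i) (y k)) \<longlonglongrightarrow> (f ^^ i) z"
    using continuous_on_tendsto_compose[OF continuous_on_funpow[OF assms(1,2)] assms(4,5)] assms(3)
    by simp
  moreover have "eventually (\<lambda>k. dist a ((f ^^ i) (y k)) \<le> \<epsilon>) sequentially"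
    using assms(6) by (simp add: dist_commute)
  ultimately have "dist a ((f ^^ i) z) \<le> \<epsilon>"
    by (rule Lim_dist_ubound[OF trivial_limit_sequentially])
  then show ?thesis
    by (simp add: dist_commute)
qed

lemma chain_recurrent_shadowing_prefix:
  assumes "compact X" "continuous_on X f" "f ` X \<subseteq> X" "\<delta> > 0"
    and shadowing: "\<And>ys. pseudo_orbit X f \<delta> ys \<Longrightarrow> \<exists>y. shadows X f \<epsilon> ys y"
    and xs: "pseudo_orbit (chain_recurrent_set X f) f \<delta> xs"
  obtains w where "w \<in> chain_recurrent_set X f" "\<And>i. i \<le> n \<Longrightarrow> dist ((f ^^ i) w) (xs i) \<le> \<epsilon>"
proof -
  have prefix: "delta_chain X f \<delta> xs (Suc n)"
    using xs chain_recurrent_set_subset unfolding pseudo_orbit_def delta_chain_def by auto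
  obtain R k where R: "delta_chain X f \<delta> R k" "R 0 = xs (Suc n)" "R k = xs 0"
    using chain_reachable_pseudo_orbit_start[OF assms(1-4) xs, of "Suc n"]
    unfolding chain_reachable_def by blast
  define T where "T = Suc n + k"
  define C where "C = (\<lambda>i. if i \<le> Suc n then xs i else R (i - Suc n))"
  have C: "delta_chain X f \<delta> C T"
    unfolding C_def T_def by (rule delta_chain_append[OF prefix R(1,2)])
  have "0 < k"
    using R(1) unfolding delta_chain_def by simp
  then have "n < T" "C T = C 0"
    using R(3) by (simp_all add: C_def T_def)
  define P where "P i = C (i mod T)" for i
  have "pseudo_orbit X f \<delta> P"
    unfolding P_def by (rule pseudo_orbit_periodic[OF C \<open>C T = C 0\<close>])
  then obtain p where p: "p \<in> X" "\<And>i. dist ((f ^^ i) p) (P i) \<le> \<epsilon>"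
    using shadowing unfolding shadows_def by blast
  define q where "q j = (f ^^ (j * T)) p" for j
  have q_X: "q j \<in> X" for j
    unfolding q_def using funpow_mem[OF assms(3) p(1)] .
  have q_shadows: "dist ((f ^^ i) (q j)) (xs i) \<le> \<epsilon>" if "i \<le> n" for i j
  proof -
    have "(f ^^ i) (q j) = (f ^^ (i + j * T)) p"
      by (simp add: q_def funpow_add)
    moreover have "P (i + j * T) = xs i"
      using that \<open>n < T\<close> by (simp add: P_def C_def)
    ultimately show ?thesis
      using p(2) by metis
  qed
  obtain w r where w: "w \<in> X" "strict_mono r" "(q \<circ> r) \<longlonglongrightarrow> w"
    using seq_compactE[OF compact_imp_seq_compact[OF assms(1)]] q_X by metis
  have "strict_mono (\<lambda>j. r j * T)"
    using w(2) \<open>n < T\<close> by (simp add: strict_mono_def)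
  moreover have "(\<lambda>j. (f ^^ (r j * T)) p) \<longlonglongrightarrow> w"
    using w(3) by (simp add: q_def o_def)
  ultimately have "w \<in> chain_recurrent_set X f"
    by (rule orbit_limit_mem_chain_recurrent_set[OF assms(2,3) p(1) w(1)])
  moreover have "dist ((f ^^ i) w) (xs i) \<le> \<epsilon>" if "i \<le> n" for i
    by (rule dist_funpow_le_of_limit[OF assms(2,3) _ w(3) w(1)]) (simp_all add: q_X q_shadows that)
  ultimately show ?thesis
    using that by blast
qed

lemma chain_recurrent_shadowing:
  assumes "compact X" "continuous_on X f" "f ` X \<subseteq> X" "\<delta> > 0"
    and shadowing: "\<And>ys. pseudo_orbit X f \<delta> ys \<Longrightarrow> \<exists>y. shadows X f \<epsilon> ys y"
    and xs: "pseudo_orbit (chain_recurrent_set X f) f \<delta> xs"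
  shows "\<exists>y. shadows (chain_recurrent_set X f) f \<epsilon> xs y"
proof -
  have "\<forall>n. \<exists>w. w \<in> chain_recurrent_set X f \<and> (\<forall>i\<le>n. dist ((f ^^ i) w) (xs i) \<le> \<epsilon>)"
    using chain_recurrent_shadowing_prefix[OF assms] by metis
  then obtain w where w_CR: "\<And>n. w n \<in> chain_recurrent_set X f"
    and w_shadows: "\<And>n i. i \<le> n \<Longrightarrow> dist ((f ^^ i) (w n)) (xs i) \<le> \<epsilon>"
    by metis
  have w_X: "w n \<in> X" for n
    using w_CR chain_recurrent_set_subset by blast
  obtain z r where z: "z \<in> X" "strict_mono r" "(w \<circ> r) \<longlonglongrightarrow> z"
    using seq_compactE[OF compact_imp_seq_compact[OF assms(1)]] w_X by metis
  have "closed (chain_recurrent_set X f)"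
    using closed_chain_recurrent_set[OF compact_imp_closed[OF assms(1)] assms(2)] .
  then have "z \<in> chain_recurrent_set X f"
    using closed_sequentially z(3) w_CR by (metis comp_apply)
  moreover have "dist ((f ^^ i) z) (xs i) \<le> \<epsilon>" for i
  proof (rule dist_funpow_le_of_limit[OF assms(2,3) _ z(3,1)])
    show "eventually (\<lambda>k. dist ((f ^^ i) ((w \<circ> r) k)) (xs i) \<le> \<epsilon>) sequentially"
      unfolding eventually_sequentially
      using w_shadows seq_suble[OF z(2)] by (metis comp_apply order_trans)
  qed (simp add: w_X)
  ultimately show ?thesis
    unfolding shadows_def by blast
qed

theorem theorem1p7:
  fixes X :: "'a::metric_space set" and f :: "'a \<Rightarrow> 'a" and L :: real
  assumes "compact X"
    and "L > 0"
    and "continuous_on X f"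
    and "f ` X \<subseteq> X"
    and "lipschitz_shadowing X f L"
  shows "f ` chain_recurrent_set X f = chain_recurrent_set X f
         \<and> lipschitz_shadowing (chain_recurrent_set X f) f L"
proof
  show "f ` chain_recurrent_set X f = chain_recurrent_set X f"
    using image_chain_recurrent_set_subset[OF assms(1,3,4)]
      chain_recurrent_set_subset_image[OF assms(1,3)] by (rule antisym)
  obtain \<delta>0 where "\<delta>0 > 0" and shadowing:
    "\<And>\<delta> ys. 0 < \<delta> \<Longrightarrow> \<delta> \<le> \<delta>0 \<Longrightarrow> pseudo_orbit X f \<delta> ys \<Longrightarrow> \<exists>y. shadows X f (L * \<delta>) ys y"
    using assms(5) unfolding lipschitz_shadowing_def by blast
  have "\<exists>y. shadows (chain_recurrent_set X f) f (L * \<delta>) xs y"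
    if "0 < \<delta>" "\<delta> \<le> \<delta>0" "pseudo_orbit (chain_recurrent_set X f) f \<delta> xs" for \<delta> xs
    using chain_recurrent_shadowing[OF assms(1,3,4) that(1) shadowing[OF that(1,2)] that(3)] .
  then show "lipschitz_shadowing (chain_recurrent_set X f) f L"
    unfolding lipschitz_shadowing_def using \<open>\<delta>0 > 0\<close> by blast
qed

end
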